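(* Let $A=(a,ha-d,ha+d)$ with $d,h\in\mathbb{P}$, $\gcd(a,d)=1$, $ha-d>1$, and let $s=\lfloor\frac{ha-d}{2h}\rfloor$. Then \begin{align*} g(A)&=\max\Big\{\Big\lfloor\tfrac{ha-d}{2h}\Big\rfloor(ha+d)-a,\ \Big(a-\Big\lceil\tfrac{ha-d}{2h}\Big\rceil\Big)(ha-d)-a\Big\},\\ n(A)&=\tfrac{ha+d}{2a}s(s+1)+\tfrac{ha-d}{2a}(a-s)(a-s-1)-\tfrac{a-1}{2},\\ s(A)&=\Big(\tfrac{(ha+d)^2(2s+1)}{12a}-\tfrac{ha+d}{4}\Big)s(s+1)+\Big(\tfrac{(ha-d)^2(2a-2s-1)}{12a}-\tfrac{ha-d}{4}\Big)(a-s)(a-s-1)+\tfrac{a^2-1}{12}, \end{align*} and for every positive integer $\mu$, $$s_\mu(A)=\frac{1}{\mu+1}\sum_{\kappa=0}^{\mu}\binom{\mu+1}{\kappa}\mathcal{B}_\kappa a^{\kappa-1}\Big((ha+d)^{\mu+1-\kappa}\sum_{r=0}^{s}r^{\mu+1-\kappa}+(ha-d)^{\mu+1-\kappa}\sum_{r=1}^{a-s-1}r^{\mu+1-\kappa}\Big)+\frac{\mathcal{B}_{\mu+1}}{\mu+1}(a^{\mu+1}-1).$$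
   Context: For a tuple $A$ of positive integers with $\gcd(A)=1$, $\mathcal{NR}(A)$ is the finite set of nonnegative integers that cannot be written as a nonnegative integer combination of the entries of $A$; $g(A)=\max\mathcal{NR}(A)$, $n(A)=|\mathcal{NR}(A)|$, $s(A)=\sum_{n\in\mathcal{NR}(A)}n$, and $s_\mu(A)=\sum_{n\in\mathcal{NR}(A)}n^\mu$. $\mathcal{B}_\kappa$ are the Bernoulli numbers, with the convention $\mathcal{B}_0=1$, $\mathcal{B}_1=-\frac12$, $\mathcal{B}_2=\frac16$ (i.e. $\frac{t}{e^t-1}=\sum_{n\ge0}\mathcal{B}_n\frac{t^n}{n!}$). $\mathbb{P}=\{1,2,\dots\}$. *)

theory Defs
  imports Complex_Main
begin

definition representable :: "nat list \<Rightarrow> nat \<Rightarrow> bool" where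
  "representable A n \<longleftrightarrow>
     (\<exists>c :: nat list. length c = length A \<and> n = (\<Sum>i<length A. c ! i * A ! i))"

definition NR :: "nat list \<Rightarrow> nat set" where
  "NR A = {n. \<not> representable A n}"

definition frob :: "nat list \<Rightarrow> int" where
  "frob A = (if NR A = {} then -1 else int (Max (NR A)))"

definition sylv :: "nat list \<Rightarrow> nat" where
  "sylv A = card (NR A)"

definition sumNR :: "nat list \<Rightarrow> nat" where
  "sumNR A = (\<Sum>n\<in>NR A. n)"

definition powsumNR :: "nat \<Rightarrow> nat list \<Rightarrow> nat" where
  "powsumNR \<mu> A = (\<Sum>n\<in>NR A. n ^ \<mu>)"

text \<open>Bernoulli numbers with B_1 = -1/2, via the standard recursion
  sum_{k=0}^{n} C(n+1,k) B_k = 0 for n \<ge> 1, equivalent to t/(e^t-1) = sum B_n t^n/n!.\<close>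
fun bernoulli :: "nat \<Rightarrow> real" where
  "bernoulli n = (if n = 0 then 1 else
      - (\<Sum>k<n. real (Suc n choose k) * (if k < n then bernoulli k else 0)) / real (Suc n))"

end

(* Modulo a, the residue class of k d (k < a) contains the least representable number
   w k = min (k (ha + d)) ((a - k) (ha - d)): a combination of y copies of ha - d and z copies
   of ha + d lies in that class iff t = z - y is congruent to k modulo a, and then it is at least
   k (ha + d) if t >= k and at least (a - k) (ha - d) if t <= k - a.  So the gaps are the numbers
   w k - a, w k - 2a, ... down to the residue, whence g = max w - a, and summing n^mu along each
   of these progressions telescopes through the Bernoulli polynomial F with F (x + a) - F x = x^mu;
   Raabe's multiplication formula evaluates the contribution of the residues.  Finally
   w k = k (ha + d) exactly when 2hk <= ha - d, i.e. when k <= s. *)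

theory Submission
  imports Defs "HOL-Number_Theory.Cong"
begin

section \<open>Bernoulli polynomials\<close>

declare bernoulli.simps [simp del]

lemma bernoulli_0 [simp]: "bernoulli 0 = 1"
  by (subst bernoulli.simps) simp

lemma sum_binomial_bernoulli:
  "(\<Sum>k<n. real (n choose k) * bernoulli k) = (if n = 1 then 1 else 0)"
proof (cases "n \<le> 1")
  case True
  then show ?thesis by (auto simp: le_Suc_eq)
next
  case False
  then obtain m where n: "n = Suc (Suc m)"
    by (intro that [of "n - 2"]) simp
  have "bernoulli (Suc m) * real n = - (\<Sum>k<Suc m. real (n choose k) * bernoulli k)"
    by (subst bernoulli.simps) (simp add: n cong: sum.cong_simp)
  then show ?thesis by (simp add: n algebra_simps)
qed

lemma bernoulli_1: "bernoulli (Suc 0) = - 1 / 2"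
  using sum_binomial_bernoulli [of 2] by (simp add: numeral_2_eq_2)

lemma bernoulli_2: "bernoulli 2 = 1 / 6"
  using sum_binomial_bernoulli [of 3] by (simp add: numeral_3_eq_3 numeral_2_eq_2 bernoulli_1)

definition bernpoly :: "nat \<Rightarrow> real \<Rightarrow> real" where
  "bernpoly n x = (\<Sum>k\<le>n. real (n choose k) * bernoulli k * x ^ (n - k))"

lemma bernpoly_0 [simp]: "bernpoly n 0 = bernoulli n"
proof -
  have "bernpoly n 0 = (\<Sum>k\<le>n. if k = n then bernoulli n else 0)"
    unfolding bernpoly_def by (rule sum.cong) (auto simp: power_0_left)
  then show ?thesis by simp
qed

lemma bernpoly_1: "bernpoly n 1 = bernoulli n + (if n = 1 then 1 else 0)"
  using sum_binomial_bernoulli [of n]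
  by (simp add: bernpoly_def atMost_Suc lessThan_Suc_atMost [symmetric])

lemma bernpoly_add:
  "bernpoly n (x + y) = (\<Sum>m\<le>n. real (n choose m) * x ^ (n - m) * bernpoly m y)"
proof -
  have choose: "real (n choose k) * real (n - k choose i)
      = real (n choose (k + i)) * real (k + i choose k)" if "k + i \<le> n" for k i
    using choose_mult [of k "k + i" n] that by (simp flip: of_nat_mult)
  let ?g = "\<lambda>k i. real (n choose (k + i)) * real (k + i choose k) * bernoulli k
    * y ^ i * x ^ (n - (k + i))"
  have "bernpoly n (x + y)
      = (\<Sum>k\<le>n. \<Sum>i\<le>n - k. real (n choose k) * bernoulli k
          * (real (n - k choose i) * y ^ i * x ^ (n - k - i)))"
    by (simp add: bernpoly_def add.commute [of x] binomial_ring sum_distrib_left)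
  also have "\<dots> = (\<Sum>(k, i)\<in>(SIGMA k:{..n}. {..n - k}). ?g k i)"
    by (auto simp: sum.Sigma [symmetric] choose [symmetric] diff_diff_add intro!: sum.cong)
  also have "(SIGMA k:{..n}. {..n - k}) = {(k, i). k + i \<le> n}"
    by auto
  also have "(\<Sum>(k, i)\<in>{(k, i). k + i \<le> n}. ?g k i) = (\<Sum>m\<le>n. \<Sum>k\<le>m. ?g k (m - k))"
    by (rule sum.triangle_reindex_eq)
  also have "\<dots> = (\<Sum>m\<le>n. real (n choose m) * x ^ (n - m) * bernpoly m y)"
    unfolding bernpoly_def sum_distrib_left by (intro sum.cong refl) (simp add: mult_ac)
  finally show ?thesis .
qed

lemma bernpoly_diff: "bernpoly n (x + 1) - bernpoly n x = real n * x ^ (n - 1)"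
proof -
  have "bernpoly n (x + 1) - bernpoly n (x + 0)
      = (\<Sum>m\<le>n. real (n choose m) * x ^ (n - m) * (bernpoly m 1 - bernpoly m 0))"
    unfolding bernpoly_add by (simp add: sum_subtractf algebra_simps)
  also have "\<dots> = (\<Sum>m\<le>n. if m = 1 then real (n choose m) * x ^ (n - m) else 0)"
    by (rule sum.cong) (auto simp: bernpoly_1)
  also have "\<dots> = real n * x ^ (n - 1)"
    by (cases n) auto
  finally show ?thesis by simp
qed

lemma bernpoly_add_scaled:
  assumes "a > 0"
  shows "(\<Sum>m\<le>n. real (n choose m) * (real a ^ m * bernpoly m y))
    = real a ^ n * bernpoly n (1 / real a + y)"
proof -
  have "real a ^ n * (1 / real a) ^ (n - m) = real a ^ m" if "m \<le> n" for m
    using that assms by (simp add: power_one_over power_diff)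
  then show ?thesis
    by (simp add: bernpoly_add sum_distrib_left mult_ac cong: sum.cong_simp)
qed

text \<open>Raabe's multiplication formula at 0.  Shifting all arguments by 1/a telescopes, so the
  defect R is reproduced by its binomial sums, which forces it to vanish.\<close>

lemma sum_bernpoly_fractions:
  assumes "a > 0"
  shows "real a ^ n * (\<Sum>r<a. bernpoly n (real r / real a)) = real a * bernoulli n"
proof -
  define R where
    "R m = real a ^ m * (\<Sum>r<a. bernpoly m (real r / real a)) - real a * bernoulli m" for m
  have binomial_R: "(\<Sum>m\<le>n. real (n choose m) * R m) = R n" for n
  proof -
    have at_1: "(\<Sum>m\<le>n. real (n choose m) * bernoulli m) = bernpoly n 1"
      using bernpoly_add [of n 1 0] by simp
    have telescope: "(\<Sum>r<a. bernpoly n (1 / real a + real r / real a))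
        = (\<Sum>r<a. bernpoly n (real r / real a)) + (bernpoly n 1 - bernpoly n 0)"
      using sum_lessThan_telescope [of "\<lambda>r. bernpoly n (real r / real a)" a] assms
      by (simp add: sum_subtractf add_divide_distrib add.commute)
    have "(\<Sum>m\<le>n. real (n choose m) * R m)
        = real a ^ n * (\<Sum>r<a. bernpoly n (1 / real a + real r / real a)) - real a * bernpoly n 1"
      by (simp add: R_def right_diff_distrib sum_subtractf sum_distrib_left sum.swap [of _ "{..<a}"]
            bernpoly_add_scaled [OF assms] at_1 [symmetric] mult_ac)
    also have "\<dots> = R n + (real a ^ n - real a) * (bernpoly n 1 - bernpoly n 0)"
      by (simp add: telescope R_def algebra_simps)
    also have "\<dots> = R n"
      by (simp add: bernpoly_1)
    finally show ?thesis .
  qed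
  have "R n = 0"
  proof (induction n rule: less_induct)
    case (less n)
    have "(\<Sum>m\<le>Suc n. real (Suc n choose m) * R m) = R (Suc n)"
      by (rule binomial_R)
    then have "(\<Sum>m<n. real (Suc n choose m) * R m) + real (Suc n) * R n = 0"
      by (simp add: lessThan_Suc_atMost [symmetric])
    with less show ?case by simp
  qed
  then show ?thesis by (simp add: R_def)
qed

section \<open>Power sums along arithmetic progressions\<close>

text \<open>Normalised so that the power-sum formula of the theorem is a sum of its values.\<close>

definition faulhaber_poly :: "nat \<Rightarrow> nat \<Rightarrow> real \<Rightarrow> real" where
  "faulhaber_poly a \<mu> x = 1 / real (\<mu> + 1) * (\<Sum>\<kappa>=0..\<mu>. real (\<mu> + 1 choose \<kappa>) * bernoulli \<kappa>
      * real a powi (int \<kappa> - 1) * x ^ (\<mu> + 1 - \<kappa>))"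

lemma faulhaber_poly_eq_bernpoly:
  assumes "a > 0"
  shows "faulhaber_poly a \<mu> x
    = real a ^ \<mu> / real (\<mu> + 1) * (bernpoly (\<mu> + 1) (x / real a) - bernoulli (\<mu> + 1))"
proof -
  have "real a powi (int \<kappa> - 1) * x ^ (\<mu> + 1 - \<kappa>) = real a ^ \<mu> * (x / real a) ^ (\<mu> + 1 - \<kappa>)"
    if "\<kappa> \<le> \<mu>" for \<kappa>
  proof -
    have "real a powi (int \<kappa> - 1) * real a ^ (\<mu> + 1 - \<kappa>)
        = real a powi (int \<kappa> - 1 + int (\<mu> + 1 - \<kappa>))"
      using assms by (simp add: power_int_add flip: power_int_of_nat)
    also have "int \<kappa> - 1 + int (\<mu> + 1 - \<kappa>) = int \<mu>"
      using that by simp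
    finally show ?thesis
      using assms by (simp add: power_divide field_simps)
  qed
  then show ?thesis
    by (simp add: faulhaber_poly_def bernpoly_def atMost_Suc atLeast0AtMost sum_distrib_left
        mult_ac cong: sum.cong_simp)
qed

lemma faulhaber_poly_step:
  assumes "a > 0"
  shows "faulhaber_poly a \<mu> (x + real a) - faulhaber_poly a \<mu> x = x ^ \<mu>"
proof -
  have "(x + real a) / real a = x / real a + 1"
    using assms by (simp add: field_simps)
  then have "faulhaber_poly a \<mu> (x + real a) - faulhaber_poly a \<mu> x
      = real a ^ \<mu> / real (\<mu> + 1)
        * (bernpoly (\<mu> + 1) (x / real a + 1) - bernpoly (\<mu> + 1) (x / real a))"
    by (simp add: faulhaber_poly_eq_bernpoly [OF assms] algebra_simps)
  also have "\<dots> = x ^ \<mu>"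
    using assms by (simp add: bernpoly_diff power_divide)
  finally show ?thesis .
qed

lemma sum_progression_power:
  assumes "a > 0"
  shows "(\<Sum>i<q. (x + real i * real a) ^ \<mu>)
    = faulhaber_poly a \<mu> (x + real q * real a) - faulhaber_poly a \<mu> x"
proof (induction q)
  case (Suc q)
  then show ?case
    using faulhaber_poly_step [OF assms, of \<mu> "x + real q * real a"] by (simp add: algebra_simps)
qed simp

lemma sum_faulhaber_poly_residues:
  assumes "a > 0"
  shows "(\<Sum>r<a. faulhaber_poly a \<mu> (real r))
    = - bernoulli (\<mu> + 1) / real (\<mu> + 1) * (real a ^ (\<mu> + 1) - 1)"
proof -
  have raabe: "real a ^ \<mu> * (\<Sum>r<a. bernpoly (\<mu> + 1) (real r / real a)) = bernoulli (\<mu> + 1)"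
    using sum_bernpoly_fractions [OF assms, of "\<mu> + 1"] assms by simp
  have "(\<Sum>r<a. faulhaber_poly a \<mu> (real r)) = real a ^ \<mu> / real (\<mu> + 1)
      * (\<Sum>r<a. bernpoly (\<mu> + 1) (real r / real a) - bernoulli (\<mu> + 1))"
    by (simp only: faulhaber_poly_eq_bernpoly [OF assms] sum_distrib_left)
  also have "\<dots> = (real a ^ \<mu> * (\<Sum>r<a. bernpoly (\<mu> + 1) (real r / real a))
      - real a ^ (\<mu> + 1) * bernoulli (\<mu> + 1)) / real (\<mu> + 1)"
    by (simp add: sum_subtractf field_simps)
  finally show ?thesis
    unfolding raabe by (simp add: field_simps)
qed

lemma sum_faulhaber_poly_multiples:
  "(\<Sum>k\<in>K. faulhaber_poly a \<mu> (real k * g))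
    = 1 / real (\<mu> + 1) * (\<Sum>\<kappa>=0..\<mu>. real (\<mu> + 1 choose \<kappa>) * bernoulli \<kappa>
        * real a powi (int \<kappa> - 1) * (g ^ (\<mu> + 1 - \<kappa>) * (\<Sum>k\<in>K. real k ^ (\<mu> + 1 - \<kappa>))))"
  unfolding faulhaber_poly_def
  by (simp add: sum_distrib_left sum.swap [of _ K] power_mult_distrib mult_ac)

section \<open>Gaps below an Apery set\<close>

lemma same_residue_below_iff:
  fixes a m n :: nat
  assumes "a > 0"
  shows "n mod a = m mod a \<and> n < m \<longleftrightarrow> (\<exists>i<m div a. n = m mod a + i * a)"
proof
  assume n: "n mod a = m mod a \<and> n < m"
  have m_eq: "m = m mod a + m div a * a" and n_eq: "n = n mod a + n div a * a"
    by simp_all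
  have "n div a < m div a"
  proof (rule ccontr)
    assume "\<not> n div a < m div a"
    then have "m div a * a \<le> n div a * a" by simp
    with n m_eq n_eq show False by linarith
  qed
  with n n_eq show "\<exists>i<m div a. n = m mod a + i * a" by auto
next
  assume "\<exists>i<m div a. n = m mod a + i * a"
  then obtain i where i: "i < m div a" "n = m mod a + i * a" by blast
  have "m mod a + m div a * a = m" by simp
  moreover have "i * a < m div a * a" using i assms by simp
  ultimately have "n < m" using i by linarith
  moreover have "n mod a = m mod a" using i by simp
  ultimately show "n mod a = m mod a \<and> n < m" by blast
qed

text \<open>When each w k is the least element of a semigroup containing a in its residue class, these
  are exactly the gaps of the semigroup.\<close>

definition apery_gaps :: "nat \<Rightarrow> (nat \<Rightarrow> nat) \<Rightarrow> nat set" where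
  "apery_gaps a w = {n. \<exists>k<a. n mod a = w k mod a \<and> n < w k}"

lemma apery_gaps_eq_UN:
  assumes "a > 0"
  shows "apery_gaps a w = (\<Union>k<a. (\<lambda>i. w k mod a + i * a) ` {..<w k div a})"
  using same_residue_below_iff [OF assms] by (auto simp: apery_gaps_def)

lemma finite_apery_gaps: "a > 0 \<Longrightarrow> finite (apery_gaps a w)"
  by (simp add: apery_gaps_eq_UN)

lemma apery_gap_plus_le:
  assumes "a > 0" and "n \<in> apery_gaps a w"
  obtains k where "k < a" and "n + a \<le> w k"
proof -
  obtain k i where "k < a" "i < w k div a" "n = w k mod a + i * a"
    using assms by (auto simp: apery_gaps_eq_UN)
  moreover from this have "i * a + a \<le> w k div a * a"
    using mult_right_mono [of "Suc i" "w k div a" a] by simp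
  moreover have "w k mod a + w k div a * a = w k" by simp
  ultimately have "n + a \<le> w k" by linarith
  with \<open>k < a\<close> show thesis by (rule that)
qed

context
  fixes a :: nat and w :: "nat \<Rightarrow> nat"
  assumes a_pos: "a > 0" and residues_bij: "bij_betw (\<lambda>k. w k mod a) {..<a} {..<a}"
begin

lemma sum_apery_gaps:
  "(\<Sum>n\<in>apery_gaps a w. f n) = (\<Sum>k<a. \<Sum>i<w k div a. f (w k mod a + i * a))"
proof -
  have disjoint: "(\<lambda>i. w k mod a + i * a) ` {..<w k div a}
      \<inter> (\<lambda>i. w j mod a + i * a) ` {..<w j div a} = {}"
    if "k < a" "j < a" "k \<noteq> j" for k j
  proof -
    have "w k mod a \<noteq> w j mod a"
      using that bij_betw_imp_inj_on [OF residues_bij] by (auto dest: inj_onD)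
    then show ?thesis
      by (auto dest: arg_cong [where f = "\<lambda>n. n mod a"])
  qed
  have "inj_on (\<lambda>i. w k mod a + i * a) I" for k I
    using a_pos by (auto intro: inj_onI)
  then show ?thesis
    unfolding apery_gaps_eq_UN [OF a_pos]
    by (simp add: sum.UNION_disjoint disjoint sum.reindex)
qed

lemma powsumNR_eq_apery:
  assumes "NR A = apery_gaps a w"
  shows "real (powsumNR \<mu> A) = (\<Sum>k<a. faulhaber_poly a \<mu> (real (w k)))
    + bernoulli (\<mu> + 1) / real (\<mu> + 1) * (real a ^ (\<mu> + 1) - 1)"
proof -
  have decompose: "real (w k mod a) + real (w k div a) * real a = real (w k)" for k
    by (simp flip: of_nat_mult of_nat_add)
  have "real (powsumNR \<mu> A) = (\<Sum>k<a. \<Sum>i<w k div a. (real (w k mod a) + real i * real a) ^ \<mu>)"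
    by (simp add: powsumNR_def assms sum_apery_gaps)
  also have "\<dots> = (\<Sum>k<a. faulhaber_poly a \<mu> (real (w k)) - faulhaber_poly a \<mu> (real (w k mod a)))"
    by (simp add: sum_progression_power [OF a_pos] decompose)
  also have "\<dots> = (\<Sum>k<a. faulhaber_poly a \<mu> (real (w k))) - (\<Sum>r<a. faulhaber_poly a \<mu> (real r))"
    using sum.reindex_bij_betw [OF residues_bij, of "\<lambda>r. faulhaber_poly a \<mu> (real r)"]
    by (simp add: sum_subtractf)
  finally show ?thesis
    by (simp add: sum_faulhaber_poly_residues [OF a_pos])
qed

lemma pred_le_Max_apery: "a - 1 \<le> Max (w ` {..<a})"
proof -
  have "a - 1 \<in> (\<lambda>k. w k mod a) ` {..<a}"
    using bij_betw_imp_surj_on [OF residues_bij] a_pos by simp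
  then obtain k where "k < a" "a - 1 = w k mod a"
    by auto
  then have "a - 1 \<le> w k"
    by simp
  also have "\<dots> \<le> Max (w ` {..<a})"
    using \<open>k < a\<close> by simp
  finally show ?thesis .
qed

lemma frob_eq_Max_apery:
  assumes "NR A = apery_gaps a w"
  shows "frob A = int (Max (w ` {..<a})) - int a"
proof -
  define G where "G = Max (w ` {..<a})"
  have gap_bound: "n + a \<le> G" if n: "n \<in> apery_gaps a w" for n
  proof -
    obtain k where "k < a" "n + a \<le> w k"
      using apery_gap_plus_le [OF a_pos n] .
    then show ?thesis
      by (simp add: G_def le_trans)
  qed
  show ?thesis
  proof (cases "a \<le> G")
    case True
    have "G \<in> w ` {..<a}"
      unfolding G_def using a_pos by (intro Max_in) auto
    then have "G - a \<in> apery_gaps a w"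
      using True a_pos by (auto simp: apery_gaps_def le_mod_geq [symmetric])
    moreover have "n \<le> G - a" if "n \<in> apery_gaps a w" for n
      using gap_bound [OF that] by simp
    ultimately have "Max (apery_gaps a w) = G - a"
      by (intro Max_eqI finite_apery_gaps a_pos)
    with \<open>G - a \<in> apery_gaps a w\<close> True show ?thesis
      by (auto simp: frob_def assms G_def)
  next
    case False
    then have "apery_gaps a w = {}"
      using gap_bound by fastforce
    moreover have "G = a - 1"
      using False pred_le_Max_apery by (simp add: G_def)
    ultimately show ?thesis
      using a_pos by (simp add: frob_def assms G_def)
  qed
qed

end

section \<open>The triple (a, ha - d, ha + d)\<close>

lemma representable_3:
  "representable [a, b, c] n \<longleftrightarrow> (\<exists>x y z. n = x * a + y * b + z * c)"
proof
  assume "representable [a, b, c] n"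
  then obtain cs :: "nat list" where "length cs = length [a, b, c]"
      and "n = (\<Sum>i<length [a, b, c]. cs ! i * [a, b, c] ! i)"
    unfolding representable_def by blast
  then have "n = cs ! 0 * a + cs ! 1 * b + cs ! 2 * c"
    by (simp add: numeral_2_eq_2 lessThan_Suc)
  then show "\<exists>x y z. n = x * a + y * b + z * c" by blast
next
  assume "\<exists>x y z. n = x * a + y * b + z * c"
  then obtain x y z where "n = x * a + y * b + z * c" by blast
  then have "length [x, y, z] = length [a, b, c]
      \<and> n = (\<Sum>i<length [a, b, c]. [x, y, z] ! i * [a, b, c] ! i)"
    by (simp add: numeral_3_eq_3 lessThan_Suc)
  then show "representable [a, b, c] n"
    unfolding representable_def by blast
qed

lemma sum_squares_real:
  "(\<Sum>r=0..n. real r ^ 2) = real n * (real n + 1) * (2 * real n + 1) / 6"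
  by (induction n) (simp_all add: field_simps power2_eq_square)

lemma sum_squares_from_1_real:
  "(\<Sum>r=1..n. real r ^ 2) = real n * (real n + 1) * (2 * real n + 1) / 6"
  by (induction n) (simp_all add: field_simps power2_eq_square)

lemma gauss_sum_real: "(\<Sum>r=0..n. real r) = real n * (real n + 1) / 2"
  using double_gauss_sum [of n, where 'a = real] by simp

lemma gauss_sum_from_1_real: "(\<Sum>r=1..n. real r) = real n * (real n + 1) / 2"
  using double_gauss_sum_from_Suc_0 [of n, where 'a = real] by simp

locale symmetric_triple =
  fixes a b c d h :: nat
  assumes d_pos: "d > 0" and h_pos: "h > 0" and coprime_a_d: "coprime a d"
    and b_eq: "b + d = h * a" and c_eq: "c = h * a + d" and b_gt_1: "b > 1"
begin

lemma a_pos: "a > 0"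
  using b_eq b_gt_1 by (cases a) auto

lemma int_b: "int b = int h * int a - int d"
  using arg_cong [OF b_eq, of int] by simp

lemma int_c: "int c = int h * int a + int d"
  using c_eq by simp

definition apery :: "nat \<Rightarrow> nat" where
  "apery k = min (k * c) ((a - k) * b)"

lemma apery_mod: "k \<le> a \<Longrightarrow> apery k mod a = (k * d) mod a"
proof -
  assume k: "k \<le> a"
  have "(k * c) mod a = (k * d) mod a"
    by (simp add: c_eq algebra_simps)
  moreover have "int ((a - k) * b) = int (k * d) + int a * (int h * int (a - k) - int d)"
    using k by (simp add: int_b of_nat_diff algebra_simps)
  then have "int ((a - k) * b) mod int a = int (k * d) mod int a"
    by simp
  then have "int (((a - k) * b) mod a) = int ((k * d) mod a)"
    by (simp only: zmod_int)
  then have "((a - k) * b) mod a = (k * d) mod a"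
    by (simp only: of_nat_eq_iff)
  ultimately show ?thesis
    by (simp add: apery_def min_def)
qed

lemma mult_d_mod_bij: "bij_betw (\<lambda>k. (k * d) mod a) {..<a} {..<a}"
proof -
  have "inj_on (\<lambda>k. (k * d) mod a) {..<a}"
  proof (rule inj_onI)
    fix k l assume "k \<in> {..<a}" "l \<in> {..<a}" "(k * d) mod a = (l * d) mod a"
    moreover from this have "[k = l] (mod a)"
      using coprime_a_d by (simp add: cong_def [symmetric] cong_mult_rcancel_nat coprime_commute)
    ultimately show "k = l"
      by (intro cong_less_modulus_unique_nat) auto
  qed
  moreover have "(\<lambda>k. (k * d) mod a) ` {..<a} \<subseteq> {..<a}"
    using a_pos by auto
  ultimately show ?thesis
    by (simp add: bij_betw_def endo_inj_surj)
qed

lemma apery_residues_bij: "bij_betw (\<lambda>k. apery k mod a) {..<a} {..<a}"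
  using mult_d_mod_bij by (rule bij_betw_cong [THEN iffD2, rotated]) (simp add: apery_mod)

lemma representable_apery: "representable [a, b, c] (apery k)"
proof (cases "k * c \<le> (a - k) * b")
  case True
  then have "apery k = 0 * a + 0 * b + k * c" by (simp add: apery_def)
  then show ?thesis unfolding representable_3 by blast
next
  case False
  then have "apery k = 0 * a + (a - k) * b + 0 * c" by (simp add: apery_def)
  then show ?thesis unfolding representable_3 by blast
qed

lemma combination_residue:
  assumes "n = x * a + y * b + z * c" and "n mod a = (k * d) mod a"
  shows "[int z - int y = int k] (mod int a)"
proof -
  have "int n = (int z - int y) * int d + int a * (int x + int h * (int y + int z))"
    using assms(1) by (simp add: int_b int_c algebra_simps)
  then have "[(int z - int y) * int d = int n] (mod int a)"
    by (simp add: cong_def)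
  also have "[int n = int (k * d)] (mod int a)"
    by (simp only: cong_int_iff) (simp add: cong_def assms(2))
  finally have "[(int z - int y) * int d = int k * int d] (mod int a)"
    by simp
  then show ?thesis
    using coprime_a_d by (simp add: cong_mult_rcancel coprime_commute)
qed

lemma combination_ge_left:
  assumes "int k \<le> int z - int y"
  shows "k * c \<le> y * b + z * c"
proof -
  have combination: "int (y * b + z * c) = 2 * int h * int a * int y + (int z - int y) * int c"
    by (simp add: int_b int_c algebra_simps)
  have "int (k * c) \<le> (int z - int y) * int c"
    using assms by (simp add: mult_right_mono)
  also have "\<dots> \<le> int (y * b + z * c)"
    unfolding combination by simp
  finally show ?thesis
    by (simp only: of_nat_le_iff)
qed

lemma combination_ge_right:
  assumes "k \<le> a" and "int z - int y \<le> int k - int a"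
  shows "(a - k) * b \<le> y * b + z * c"
proof -
  have combination: "int (y * b + z * c) = 2 * int h * int a * int z + (int y - int z) * int b"
    by (simp add: int_b int_c algebra_simps)
  have "int ((a - k) * b) = (int a - int k) * int b"
    using assms(1) by (simp add: of_nat_diff)
  also have "\<dots> \<le> (int y - int z) * int b"
    using assms(2) by (simp add: mult_right_mono)
  also have "\<dots> \<le> int (y * b + z * c)"
    unfolding combination by simp
  finally show ?thesis
    by (simp only: of_nat_le_iff)
qed

lemma apery_le_representable:
  assumes k: "k < a" and n: "n mod a = (k * d) mod a" and rep: "representable [a, b, c] n"
  shows "apery k \<le> n"
proof -
  obtain x y z where xyz: "n = x * a + y * b + z * c"
    using rep by (auto simp: representable_3)
  have "[int k = int z - int y] (mod int a)"
    using combination_residue [OF xyz n] by (rule cong_sym)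
  then obtain j where j: "int z - int y = int k + int a * j"
    by (auto simp: cong_iff_lin)
  have "apery k \<le> y * b + z * c"
  proof (cases "j \<ge> 0")
    case True
    then have "k * c \<le> y * b + z * c"
      using j by (intro combination_ge_left) simp
    then show ?thesis
      by (simp add: apery_def)
  next
    case False
    then have "int a * j \<le> - int a"
      using mult_left_mono [of j "-1" "int a"] by simp
    then have "(a - k) * b \<le> y * b + z * c"
      using j k by (intro combination_ge_right) simp_all
    then show ?thesis
      by (simp add: apery_def)
  qed
  with xyz show ?thesis
    by linarith
qed

lemma representable_iff_apery_le:
  assumes k: "k < a" and n: "n mod a = (k * d) mod a"
  shows "representable [a, b, c] n \<longleftrightarrow> apery k \<le> n"
proof
  assume le: "apery k \<le> n"
  moreover have "n mod a = apery k mod a"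
    using n apery_mod k by simp
  ultimately have "a dvd n - apery k"
    by (simp add: mod_eq_dvd_iff_nat)
  then obtain j where "n - apery k = a * j" ..
  with le have "n = apery k + a * j"
    by arith
  moreover obtain x y z where "apery k = x * a + y * b + z * c"
    using representable_apery unfolding representable_3 by blast
  ultimately have "n = (x + j) * a + y * b + z * c"
    by (simp add: algebra_simps)
  then show "representable [a, b, c] n"
    unfolding representable_3 by blast
qed (rule apery_le_representable [OF k n])

lemma NR_eq_apery_gaps: "NR [a, b, c] = apery_gaps a apery"
proof (intro set_eqI)
  fix n
  have "n mod a \<in> (\<lambda>k. (k * d) mod a) ` {..<a}"
    using bij_betw_imp_surj_on [OF mult_d_mod_bij] a_pos by simp
  then obtain k where k: "k < a" "n mod a = (k * d) mod a"
    by auto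
  have same_class: "l = k" if "l < a" "n mod a = apery l mod a" for l
  proof (rule inj_onD [OF bij_betw_imp_inj_on [OF mult_d_mod_bij]])
    show "(l * d) mod a = (k * d) mod a"
      using that k apery_mod by simp
  qed (use that k in auto)
  have "n \<in> NR [a, b, c] \<longleftrightarrow> n < apery k"
    using representable_iff_apery_le [OF k] by (auto simp: NR_def)
  also have "\<dots> \<longleftrightarrow> n \<in> apery_gaps a apery"
  proof
    assume "n < apery k"
    with k apery_mod [of k] show "n \<in> apery_gaps a apery"
      unfolding apery_gaps_def by auto
  next
    assume "n \<in> apery_gaps a apery"
    then obtain l where "l < a" "n mod a = apery l mod a" "n < apery l"
      by (auto simp: apery_gaps_def)
    with same_class show "n < apery k" by simp
  qed
  finally show "n \<in> NR [a, b, c] \<longleftrightarrow> n \<in> apery_gaps a apery" .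
qed

lemma apery_diff_int:
  "k \<le> a \<Longrightarrow> int (k * c) - int ((a - k) * b) = int a * (2 * int h * int k - int b)"
  by (simp add: int_b int_c of_nat_diff algebra_simps)

lemma apery_eq_left:
  assumes "2 * h * k \<le> b" and "k \<le> a"
  shows "apery k = k * c"
proof -
  have "int (2 * h * k) \<le> int b"
    using assms(1) by (simp only: of_nat_le_iff)
  then have "2 * int h * int k \<le> int b"
    by simp
  then have "int a * (2 * int h * int k - int b) \<le> 0"
    by (simp add: mult_nonneg_nonpos)
  then have "k * c \<le> (a - k) * b"
    using apery_diff_int [OF assms(2)] by linarith
  then show ?thesis
    by (simp add: apery_def)
qed

lemma apery_eq_right:
  assumes "b \<le> 2 * h * k" and "k \<le> a"
  shows "apery k = (a - k) * b"
proof -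
  have "int b \<le> int (2 * h * k)"
    using assms(1) by (simp only: of_nat_le_iff)
  then have "int b \<le> 2 * int h * int k"
    by simp
  then have "0 \<le> int a * (2 * int h * int k - int b)"
    by simp
  then have "(a - k) * b \<le> k * c"
    using apery_diff_int [OF assms(2)] by linarith
  then show ?thesis
    by (simp add: apery_def)
qed

definition s :: nat where
  "s = b div (2 * h)"

lemma le_s_iff: "k \<le> s \<longleftrightarrow> 2 * h * k \<le> b"
  using h_pos by (simp add: s_def less_eq_div_iff_mult_less_eq mult.commute)

lemma s_less_a: "s < a"
proof -
  have "h * (2 * s) \<le> b"
    using le_s_iff [of s] by (simp add: mult_ac)
  also have "b < h * a"
    using b_eq d_pos by linarith
  finally show ?thesis
    by simp
qed

lemma sum_apery_split:
  "(\<Sum>k<a. f (apery k)) = (\<Sum>k=0..s. f (k * c)) + (\<Sum>r=1..a - s - 1. f (r * b))"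
proof -
  have "(\<Sum>k<a. f (apery k)) = (\<Sum>k=0..<Suc s. f (apery k)) + (\<Sum>k=Suc s..<a. f (apery k))"
    unfolding lessThan_atLeast0 using s_less_a
    by (intro sum.atLeastLessThan_concat [symmetric]) auto
  also have "(\<Sum>k=0..<Suc s. f (apery k)) = (\<Sum>k=0..s. f (k * c))"
    using s_less_a by (intro sum.cong) (auto simp: apery_eq_left le_s_iff [symmetric])
  also have "(\<Sum>k=Suc s..<a. f (apery k)) = (\<Sum>k=Suc s..<a. f ((a - k) * b))"
  proof (intro sum.cong refl)
    fix k assume "k \<in> {Suc s..<a}"
    then have "b \<le> 2 * h * k" and "k \<le> a"
      using le_s_iff [of k] by auto
    then show "f (apery k) = f ((a - k) * b)"
      by (simp add: apery_eq_right)
  qed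
  also have "\<dots> = (\<Sum>r=1..a - s - 1. f (r * b))"
    by (rule sum.reindex_bij_witness [where i = "\<lambda>r. a - r" and j = "\<lambda>k. a - k"]) auto
  finally show ?thesis .
qed

definition s_ceil :: int where
  "s_ceil = \<lceil>real b / real (2 * h)\<rceil>"

lemma s_ceil_le_iff: "s_ceil \<le> int k \<longleftrightarrow> b \<le> 2 * h * k"
proof -
  have "s_ceil \<le> int k \<longleftrightarrow> real b \<le> real (2 * h * k)"
    using h_pos by (simp add: s_ceil_def ceiling_le_iff divide_le_eq mult_ac)
  then show ?thesis
    by (simp only: of_nat_le_iff)
qed

lemma apery_le_max:
  assumes "k < a"
  shows "int (apery k) \<le> max (int s * int c) ((int a - s_ceil) * int b)"
proof (cases "k \<le> s")
  case True
  then have "apery k \<le> s * c"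
    using assms by (simp add: apery_eq_left le_s_iff [symmetric])
  then have "int (apery k) \<le> int s * int c"
    by (simp only: of_nat_mult [symmetric] of_nat_le_iff)
  then show ?thesis
    by simp
next
  case False
  then have "s_ceil \<le> int k" and "apery k = (a - k) * b"
    using assms le_s_iff [of k] s_ceil_le_iff [of k] by (simp_all add: apery_eq_right)
  then have "int (apery k) \<le> (int a - s_ceil) * int b"
    using assms by (simp add: of_nat_diff mult_right_mono)
  then show ?thesis
    by simp
qed

lemma max_le_Max_apery:
  "max (int s * int c) ((int a - s_ceil) * int b) \<le> int (Max (apery ` {..<a}))"
proof -
  have apery_le_Max: "int (apery k) \<le> int (Max (apery ` {..<a}))" if "k < a" for k
    using that by simp
  have "int s * int c = int (apery s)"
    using s_less_a by (simp add: apery_eq_left le_s_iff [symmetric])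
  also have "\<dots> \<le> int (Max (apery ` {..<a}))"
    using s_less_a by (rule apery_le_Max)
  finally have left: "int s * int c \<le> int (Max (apery ` {..<a}))" .
  have right: "(int a - s_ceil) * int b \<le> int (Max (apery ` {..<a}))"
  proof (cases "s_ceil < int a")
    case True
    have "s_ceil > 0"
      using s_ceil_le_iff [of 0] b_gt_1 by simp
    then have "(int a - s_ceil) * int b = int (apery (nat s_ceil))"
      using True s_ceil_le_iff [of "nat s_ceil"] by (simp add: apery_eq_right of_nat_diff)
    also have "\<dots> \<le> int (Max (apery ` {..<a}))"
      using True \<open>s_ceil > 0\<close> by (intro apery_le_Max) linarith
    finally show ?thesis .
  next
    case False
    then have "(int a - s_ceil) * int b \<le> 0"
      by (simp add: mult_nonpos_nonneg)
    also have "0 \<le> int (Max (apery ` {..<a}))"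
      by simp
    finally show ?thesis .
  qed
  from left right show ?thesis
    by simp
qed

lemma Max_apery: "int (Max (apery ` {..<a})) = max (int s * int c) ((int a - s_ceil) * int b)"
proof (rule antisym)
  have "Max (apery ` {..<a}) \<in> apery ` {..<a}"
    using a_pos by (intro Max_in) auto
  then show "int (Max (apery ` {..<a})) \<le> max (int s * int c) ((int a - s_ceil) * int b)"
    using apery_le_max by auto
qed (rule max_le_Max_apery)

lemma frob_eq: "frob [a, b, c] = max (int s * int c - int a) ((int a - s_ceil) * int b - int a)"
  using frob_eq_Max_apery [OF a_pos apery_residues_bij NR_eq_apery_gaps]
  by (simp add: Max_apery max_diff_distrib_left)

lemma powsumNR_eq:
  "real (powsumNR \<mu> [a, b, c]) =
     1 / real (\<mu> + 1) * (\<Sum>\<kappa>=0..\<mu>. real (\<mu> + 1 choose \<kappa>) * bernoulli \<kappa> * real a powi (int \<kappa> - 1)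
       * (real c ^ (\<mu> + 1 - \<kappa>) * (\<Sum>r=0..s. real r ^ (\<mu> + 1 - \<kappa>))
          + real b ^ (\<mu> + 1 - \<kappa>) * (\<Sum>r=1..a - s - 1. real r ^ (\<mu> + 1 - \<kappa>))))
     + bernoulli (\<mu> + 1) / real (\<mu> + 1) * (real a ^ (\<mu> + 1) - 1)"
  using powsumNR_eq_apery [OF a_pos apery_residues_bij NR_eq_apery_gaps, of \<mu>]
    sum_apery_split [of "\<lambda>n. faulhaber_poly a \<mu> (real n)"]
  by (simp add: sum_faulhaber_poly_multiples distrib_left sum.distrib)

lemma sylv_eq:
  "real (sylv [a, b, c]) = real c / (2 * real a) * real s * (real s + 1)
     + real b / (2 * real a) * (real a - real s) * (real a - real s - 1) - (real a - 1) / 2"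
proof -
  have "real (sylv [a, b, c]) = real (powsumNR 0 [a, b, c])"
    by (simp add: sylv_def powsumNR_def)
  also have "\<dots> = (real c * (\<Sum>r=0..s. real r) + real b * (\<Sum>r=1..a - s - 1. real r)) / real a
      - (real a - 1) / 2"
    by (simp add: powsumNR_eq bernoulli_1 power_int_minus field_simps)
  also have "\<dots> = real c / (2 * real a) * real s * (real s + 1)
      + real b / (2 * real a) * (real a - real s) * (real a - real s - 1) - (real a - 1) / 2"
    unfolding gauss_sum_real gauss_sum_from_1_real
    using a_pos s_less_a by (simp add: of_nat_diff field_simps)
  finally show ?thesis .
qed

lemma sumNR_eq:
  "real (sumNR [a, b, c]) =
     (real c ^ 2 * (2 * real s + 1) / (12 * real a) - real c / 4) * real s * (real s + 1)
     + (real b ^ 2 * (2 * real a - 2 * real s - 1) / (12 * real a) - real b / 4)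
         * (real a - real s) * (real a - real s - 1)
     + (real a ^ 2 - 1) / 12"
proof -
  have "{0..Suc 0} = {0, 1::nat}"
    by auto
  then have "real (sumNR [a, b, c])
      = (real c ^ 2 * (\<Sum>r=0..s. real r ^ 2)
          + real b ^ 2 * (\<Sum>r=1..a - s - 1. real r ^ 2)) / (2 * real a)
        - (real c * (\<Sum>r=0..s. real r) + real b * (\<Sum>r=1..a - s - 1. real r)) / 2
        + (real a ^ 2 - 1) / 12"
    using powsumNR_eq [of 1] a_pos
    by (simp add: sumNR_def powsumNR_def bernoulli_1 bernoulli_2 [unfolded numeral_2_eq_2]
        power_int_minus numeral_2_eq_2 field_simps)
  also have "\<dots>
      = (real c ^ 2 * (2 * real s + 1) / (12 * real a) - real c / 4) * real s * (real s + 1)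
        + (real b ^ 2 * (2 * real a - 2 * real s - 1) / (12 * real a) - real b / 4)
            * (real a - real s) * (real a - real s - 1)
        + (real a ^ 2 - 1) / 12"
    unfolding gauss_sum_real gauss_sum_from_1_real sum_squares_real sum_squares_from_1_real
    using a_pos s_less_a by (simp add: of_nat_diff field_simps power2_eq_square)
  finally show ?thesis .
qed

end

theorem mainTheorem6:
  fixes a d h :: nat
  assumes "d > 0" and "h > 0" and "gcd a d = 1"
    and "int h * int a - int d > 1"
  defines "A \<equiv> [a, h * a - d, h * a + d]"
    and "s \<equiv> nat \<lfloor>real (h * a - d) / real (2 * h)\<rfloor>"
  shows "frob A = max (\<lfloor>real (h * a - d) / real (2 * h)\<rfloor> * int (h * a + d) - int a)
                     ((int a - \<lceil>real (h * a - d) / real (2 * h)\<rceil>) * int (h * a - d) - int a)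
    \<and> real (sylv A) = real (h * a + d) / (2 * real a) * real s * (real s + 1)
         + real (h * a - d) / (2 * real a) * (real a - real s) * (real a - real s - 1)
         - (real a - 1) / 2
    \<and> real (sumNR A) =
         (real (h * a + d) ^ 2 * (2 * real s + 1) / (12 * real a) - real (h * a + d) / 4)
            * real s * (real s + 1)
       + (real (h * a - d) ^ 2 * (2 * real a - 2 * real s - 1) / (12 * real a) - real (h * a - d) / 4)
            * (real a - real s) * (real a - real s - 1)
       + (real a ^ 2 - 1) / 12
    \<and> (\<forall>\<mu>::nat. \<mu> > 0 \<longrightarrow>
         real (powsumNR \<mu> A) =
           1 / real (\<mu> + 1) * (\<Sum>\<kappa>=0..\<mu>. real (\<mu> + 1 choose \<kappa>) * bernoulli \<kappa>
              * real a powi (int \<kappa> - 1)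
              * (real (h * a + d) ^ (\<mu> + 1 - \<kappa>) * (\<Sum>r=0..s. real r ^ (\<mu> + 1 - \<kappa>))
                 + real (h * a - d) ^ (\<mu> + 1 - \<kappa>) * (\<Sum>r=1..a - s - 1. real r ^ (\<mu> + 1 - \<kappa>))))
           + bernoulli (\<mu> + 1) / real (\<mu> + 1) * (real a ^ (\<mu> + 1) - 1))"
proof -
  have "int (d + 1) < int (h * a)"
    using assms(4) by simp
  then have "d + 1 < h * a"
    by (simp only: of_nat_less_iff)
  then interpret T: symmetric_triple a "h * a - d" "h * a + d" d h
    using assms(1-3) by unfold_locales (simp_all add: coprime_iff_gcd_eq_1)
  have floor_eq: "\<lfloor>real (h * a - d) / real (2 * h)\<rfloor> = int T.s"
    unfolding T.s_def by (rule floor_divide_of_nat_eq)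
  then have "s = T.s"
    by (simp add: s_def)
  show ?thesis
    unfolding A_def floor_eq \<open>s = T.s\<close> T.s_ceil_def [symmetric]
    using T.frob_eq T.sylv_eq T.sumNR_eq T.powsumNR_eq by blast
qed

end
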